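(* Let $a,b,c,d\in\mathbb{R}$, let $F(q_1,q_2)=aq_1^3+bq_1^2q_2+cq_1q_2^2+dq_2^3$, and let $L=\{(q,\nabla F(q)):q\in\mathbb{R}^2\}\subset\mathbb{R}^4$. Consider the map $\Psi:\mathbb{R}^2\times\mathbb{R}^2\to\mathbb{R}^4$, $\Psi(q,w)=(q+w,\nabla F(q)+\nabla^2F(q)w)$ (i.e. $\Psi(X,W)=X+W$ on $TL$), let $\Delta$ be its set of critical points and $\Sigma=\Psi(\Delta)$. The following are equivalent: (i) $18abcd+b^2c^2>4ac^3+4b^3d+27a^2d^2$; (ii) $\Delta$ equals the zero section $\{w=0\}$ (and then, in particular, $\Sigma=L$); (iii) every regular value of $\Psi$ has multiplicity $2$. Moreover, the opposite inequality $18abcd+b^2c^2<4ac^3+4b^3d+27a^2d^2$ is equivalent to the multiplicity of $\Psi$ (at regular values) being $0$ and $4$; in this case $\Delta$ is not equal to the zero section.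
   Context: $\mathbb{R}^4$ has coordinates $(q_1,q_2,p_1,p_2)$ and symplectic form $\sum_i dp_i\wedge dq_i$; $L$ is a Lagrangian submanifold, and $TL$ is identified with $\mathbb{R}^2\times\mathbb{R}^2$ via $(q,w)\mapsto$ the tangent vector $(w,\nabla^2F(q)w)$ at $(q,\nabla F(q))$, where $\nabla^2F(q)$ is the Hessian. The image of $\Psi$ is where the outer symplectic billiard correspondence of $L$ is defined. The multiplicity of a regular value is its number of preimages under $\Psi$. *)

theory Defs
  imports "HOL-Analysis.Analysis"
begin

definition cubicF :: "real \<Rightarrow> real \<Rightarrow> real \<Rightarrow> real \<Rightarrow> real^2 \<Rightarrow> real" where
  "cubicF a b c d q = a * (q$1)^3 + b * (q$1)^2 * (q$2) + c * (q$1) * (q$2)^2 + d * (q$2)^3"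

definition gradient :: "(real^2 \<Rightarrow> real) \<Rightarrow> real^2 \<Rightarrow> real^2" where
  "gradient f q = (THE g. (f has_derivative (\<lambda>h. g \<bullet> h)) (at q))"

definition hessian :: "(real^2 \<Rightarrow> real) \<Rightarrow> real^2 \<Rightarrow> real^2^2" where
  "hessian f q = (THE H. (gradient f has_derivative (\<lambda>h. H *v h)) (at q))"

text \<open>R^4 with coordinates (q1,q2,p1,p2) is modelled as real^2 * real^2 (q,p).
  Psi(q,w) = (q + w, grad F(q) + Hess F(q) w).\<close>
definition Psi :: "(real^2 \<Rightarrow> real) \<Rightarrow> (real^2) \<times> (real^2) \<Rightarrow> (real^2) \<times> (real^2)" where
  "Psi f x = (fst x + snd x, gradient f (fst x) + hessian f (fst x) *v snd x)"

definition lagr_graph :: "(real^2 \<Rightarrow> real) \<Rightarrow> ((real^2) \<times> (real^2)) set" where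
  "lagr_graph f = {(q, gradient f q) | q. True}"

definition critical_point :: "('a::real_normed_vector \<Rightarrow> 'b::real_normed_vector) \<Rightarrow> 'a \<Rightarrow> bool" where
  "critical_point g x \<longleftrightarrow> \<not> (\<exists>D. (g has_derivative D) (at x) \<and> surj D)"

definition critical_set :: "('a::real_normed_vector \<Rightarrow> 'b::real_normed_vector) \<Rightarrow> 'a set" where
  "critical_set g = {x. critical_point g x}"

definition critical_values :: "('a::real_normed_vector \<Rightarrow> 'b::real_normed_vector) \<Rightarrow> 'b set" where
  "critical_values g = g ` critical_set g"

definition regular_value :: "('a::real_normed_vector \<Rightarrow> 'b::real_normed_vector) \<Rightarrow> 'b \<Rightarrow> bool" where
  "regular_value g y \<longleftrightarrow> y \<notin> critical_values g"

definition has_multiplicity :: "('a \<Rightarrow> 'b) \<Rightarrow> 'b \<Rightarrow> nat \<Rightarrow> bool" where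
  "has_multiplicity g y n \<longleftrightarrow> finite {x. g x = y} \<and> card {x. g x = y} = n"

definition zero_section :: "((real^2) \<times> (real^2)) set" where
  "zero_section = {x. snd x = 0}"

end

theory Submission
  imports Defs
begin

text \<open>
  Because \<open>\<nabla>F\<close> is a quadratic map, \<open>\<nabla>F(q) + \<nabla>\<^sup>2F(q) w = \<nabla>F(q + w) - \<nabla>F(w)\<close>, so
  \<open>\<Psi>(q, w) = (q + w, \<nabla>F(q + w) - \<nabla>F(w))\<close>. Hence \<open>\<Psi>\<close> is critical at \<open>(q, w)\<close> exactly when
  the Hessian of \<open>F\<close> at \<open>w\<close> is singular, and the fibre of \<open>\<Psi>\<close> over \<open>(y\<^sub>1, y\<^sub>2)\<close> is in
  bijection with the fibre of \<open>\<nabla>F\<close> over \<open>\<nabla>F(y\<^sub>1) - y\<^sub>2\<close>. Everything therefore reduces to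
  counting the preimages of the planar quadratic map \<open>\<nabla>F\<close> at its regular values.

  This count is invariant under linear substitutions of the variables, which multiply the
  discriminant by the sixth power of the determinant. A real binary cubic has a real linear
  factor, so it is equivalent to one of the normal forms \<open>x\<^sup>3 - 3xy\<^sup>2\<close> (positive discriminant;
  in the complex coordinate \<open>z = x + iy\<close> the gradient is \<open>3\<close> times the conjugate of \<open>z\<^sup>2\<close>,
  with exactly two preimages away from \<open>0\<close>), \<open>x\<^sup>3 + y\<^sup>3\<close> (negative discriminant; the gradient is
  \<open>(3x\<^sup>2, 3y\<^sup>2)\<close>, with zero or four preimages), or \<open>x\<^sup>2y\<close>, \<open>x\<^sup>3\<close>, \<open>0\<close> (zero discriminant).
\<close>

section \<open>Counting preimages at regular values\<close>

text \<open>The set \<open>K\<close> plays the role of the critical set of \<open>G\<close>: \<open>v\<close> is a regular value iff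
  \<open>v \<notin> G ` K\<close>.\<close>

definition regular_multiplicities :: "('a \<Rightarrow> 'b) \<Rightarrow> 'a set \<Rightarrow> nat set \<Rightarrow> bool" where
  "regular_multiplicities G K S \<longleftrightarrow> (\<forall>v. v \<notin> G ` K \<longrightarrow> (\<exists>n\<in>S. has_multiplicity G v n))"

definition has_regular_multiplicity :: "('a \<Rightarrow> 'b) \<Rightarrow> 'a set \<Rightarrow> nat \<Rightarrow> bool" where
  "has_regular_multiplicity G K n \<longleftrightarrow> (\<exists>v. v \<notin> G ` K \<and> has_multiplicity G v n)"

lemma regular_multiplicities_critical_set:
  "regular_multiplicities g (critical_set g) S \<longleftrightarrow>
     (\<forall>y. regular_value g y \<longrightarrow> (\<exists>n\<in>S. has_multiplicity g y n))"
  by (simp add: regular_multiplicities_def regular_value_def critical_values_def)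

lemma has_regular_multiplicity_critical_set:
  "has_regular_multiplicity g (critical_set g) n \<longleftrightarrow>
     (\<exists>y. regular_value g y \<and> has_multiplicity g y n)"
  by (simp add: has_regular_multiplicity_def regular_value_def critical_values_def)

lemma regular_multiplicities_mem:
  "regular_multiplicities G K S \<Longrightarrow> has_regular_multiplicity G K n \<Longrightarrow> n \<in> S"
  unfolding regular_multiplicities_def has_regular_multiplicity_def has_multiplicity_def by auto

lemma has_multiplicity_outside_range: "v \<notin> range G \<Longrightarrow> has_multiplicity G v n \<longleftrightarrow> n = 0"
proof -
  assume "v \<notin> range G"
  then have "{x. G x = v} = {}" by auto
  then show ?thesis by (auto simp: has_multiplicity_def)
qed

lemma has_regular_multiplicity_0I: "v \<notin> range G \<Longrightarrow> has_regular_multiplicity G K 0"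
  unfolding has_regular_multiplicity_def
  by (intro exI[of _ v]) (auto simp: has_multiplicity_outside_range)

lemma has_multiplicity_bij_betw:
  assumes "bij_betw h {x. G' x = y} {x. G x = z}"
  shows "has_multiplicity G' y n \<longleftrightarrow> has_multiplicity G z n"
  using bij_betw_finite[OF assms] bij_betw_same_card[OF assms]
  by (simp add: has_multiplicity_def)

lemma all_surj_iff:
  assumes "surj \<sigma>"
  shows "(\<forall>y. P (\<sigma> y)) \<longleftrightarrow> (\<forall>v. P v)"
proof
  assume "\<forall>y. P (\<sigma> y)"
  then have "P (\<sigma> (inv \<sigma> v))" for v by blast
  then show "\<forall>v. P v" using surj_f_inv_f[OF assms] by simp
qed blast

lemma ex_surj_iff: "surj \<sigma> \<Longrightarrow> (\<exists>y. P (\<sigma> y)) \<longleftrightarrow> (\<exists>v. P v)"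
  using all_surj_iff[of \<sigma> "\<lambda>v. \<not> P v"] by blast

lemma regular_multiplicities_transfer:
  assumes "surj \<sigma>"
    and mult: "\<And>y n. has_multiplicity G' y n \<longleftrightarrow> has_multiplicity G (\<sigma> y) n"
    and crit: "\<And>y. y \<in> G' ` K' \<longleftrightarrow> \<sigma> y \<in> G ` K"
  shows "regular_multiplicities G' K' S \<longleftrightarrow> regular_multiplicities G K S"
    and "has_regular_multiplicity G' K' n \<longleftrightarrow> has_regular_multiplicity G K n"
  unfolding regular_multiplicities_def has_regular_multiplicity_def mult crit
  by (rule all_surj_iff[OF \<open>surj \<sigma>\<close>], rule ex_surj_iff[OF \<open>surj \<sigma>\<close>])

lemma regular_multiplicities_conjugate:
  assumes "bij \<phi>" "bij \<psi>" and G': "\<And>u. G' u = \<psi> (G (\<phi> u))" and K': "K' = \<phi> -` K"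
  shows "regular_multiplicities G' K' S \<longleftrightarrow> regular_multiplicities G K S"
    and "has_regular_multiplicity G' K' n \<longleftrightarrow> has_regular_multiplicity G K n"
proof -
  have fibre: "G' u = y \<longleftrightarrow> G (\<phi> u) = inv \<psi> y" for u y
    using G' bij_inv_eq_iff[OF \<open>bij \<psi>\<close>] by metis
  have fibres: "bij_betw \<phi> {u. G' u = y} {x. G x = inv \<psi> y}" for y
  proof (rule bij_betw_subset[OF \<open>bij \<phi>\<close> subset_UNIV])
    have "{u. G' u = y} = \<phi> -` {x. G x = inv \<psi> y}"
      using fibre by auto
    then show "\<phi> ` {u. G' u = y} = {x. G x = inv \<psi> y}"
      by (simp only: surj_image_vimage_eq[OF bij_is_surj[OF \<open>bij \<phi>\<close>]])
  qed
  have critical: "y \<in> G' ` K' \<longleftrightarrow> inv \<psi> y \<in> G ` K" for y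
  proof -
    have "y \<in> G' ` K' \<longleftrightarrow> (\<exists>u. \<phi> u \<in> K \<and> G' u = y)"
      by (auto simp: K')
    also have "\<dots> \<longleftrightarrow> (\<exists>u. \<phi> u \<in> K \<and> G (\<phi> u) = inv \<psi> y)"
      by (simp only: fibre)
    also have "\<dots> \<longleftrightarrow> (\<exists>x. x \<in> K \<and> G x = inv \<psi> y)"
      by (rule ex_surj_iff[OF bij_is_surj[OF \<open>bij \<phi>\<close>]])
    also have "\<dots> \<longleftrightarrow> inv \<psi> y \<in> G ` K"
      by (simp add: image_iff Bex_def eq_commute conj_commute)
    finally show ?thesis .
  qed
  have "surj (inv \<psi>)"
    using \<open>bij \<psi>\<close> bij_betw_inv_into bij_is_surj by blast
  from regular_multiplicities_transfer[OF this has_multiplicity_bij_betw[OF fibres] critical]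
  show "regular_multiplicities G' K' S \<longleftrightarrow> regular_multiplicities G K S"
    and "has_regular_multiplicity G' K' n \<longleftrightarrow> has_regular_multiplicity G K n" .
qed

lemma bij_vimage_subset_zero_iff:
  assumes "bij \<phi>" "\<phi> 0 = 0"
  shows "\<phi> -` K \<subseteq> {0} \<longleftrightarrow> K \<subseteq> {0}"
proof
  assume "\<phi> -` K \<subseteq> {0}"
  then have "\<phi> ` (\<phi> -` K) \<subseteq> \<phi> ` {0}"
    by (rule image_mono)
  then show "K \<subseteq> {0}"
    using assms by (simp add: surj_image_vimage_eq bij_is_surj)
next
  assume "K \<subseteq> {0}"
  show "\<phi> -` K \<subseteq> {0}"
  proof
    fix u assume "u \<in> \<phi> -` K"
    then have "\<phi> u = \<phi> 0"
      using \<open>K \<subseteq> {0}\<close> assms(2) by auto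
    then show "u \<in> {0}"
      using bij_is_inj[OF assms(1)] by (simp add: inj_eq)
  qed
qed

text \<open>The three behaviours are named after the elliptic, hyperbolic and parabolic umbilics,
  whose generating functions are the binary cubics \<open>x\<^sup>3 - 3xy\<^sup>2\<close>, \<open>x\<^sup>3 + y\<^sup>3\<close> and \<open>x\<^sup>2y\<close>.\<close>

definition elliptic_fibres :: "('a::zero \<Rightarrow> 'b) \<Rightarrow> 'a set \<Rightarrow> bool" where
  "elliptic_fibres G K \<longleftrightarrow> K \<subseteq> {0} \<and> regular_multiplicities G K {2}"

definition hyperbolic_fibres :: "('a::zero \<Rightarrow> 'b) \<Rightarrow> 'a set \<Rightarrow> bool" where
  "hyperbolic_fibres G K \<longleftrightarrow> \<not> K \<subseteq> {0} \<and> regular_multiplicities G K {0, 4}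
     \<and> has_regular_multiplicity G K 0 \<and> has_regular_multiplicity G K 4"

definition parabolic_fibres :: "('a::zero \<Rightarrow> 'b) \<Rightarrow> 'a set \<Rightarrow> bool" where
  "parabolic_fibres G K \<longleftrightarrow> \<not> K \<subseteq> {0}
     \<and> has_regular_multiplicity G K 0 \<and> \<not> has_regular_multiplicity G K 4"

lemma fibre_types_conjugate:
  assumes "bij \<phi>" "bij \<psi>" "\<And>u. G' u = \<psi> (G (\<phi> u))" "K' = \<phi> -` K" "\<phi> 0 = 0"
  shows "elliptic_fibres G' K' \<longleftrightarrow> elliptic_fibres G K"
    and "hyperbolic_fibres G' K' \<longleftrightarrow> hyperbolic_fibres G K"
    and "parabolic_fibres G' K' \<longleftrightarrow> parabolic_fibres G K"
proof -
  have "K' \<subseteq> {0} \<longleftrightarrow> K \<subseteq> {0}"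
    unfolding assms(4) by (rule bij_vimage_subset_zero_iff[OF assms(1,5)])
  then show "elliptic_fibres G' K' \<longleftrightarrow> elliptic_fibres G K"
    and "hyperbolic_fibres G' K' \<longleftrightarrow> hyperbolic_fibres G K"
    and "parabolic_fibres G' K' \<longleftrightarrow> parabolic_fibres G K"
    unfolding elliptic_fibres_def hyperbolic_fibres_def parabolic_fibres_def
      regular_multiplicities_conjugate[where G' = G' and G = G, OF assms(1-4)]
    by simp_all
qed

lemma not_subset_zero_pairI: "(0, 1) \<in> K \<Longrightarrow> \<not> K \<subseteq> {0 :: real \<times> real}"
  by (auto simp: zero_prod_def)

section \<open>Difference maps and their critical points\<close>

definition difference_map :: "('a::ab_group_add \<Rightarrow> 'a) \<Rightarrow> 'a \<times> 'a \<Rightarrow> 'a \<times> 'a" where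
  "difference_map G z = (fst z + snd z, G (fst z + snd z) - G (snd z))"

lemma difference_map_eq_iff:
  "difference_map G z = y \<longleftrightarrow> fst z = fst y - snd z \<and> G (snd z) = G (fst y) - snd y"
  by (auto simp: difference_map_def prod_eq_iff algebra_simps)

lemma difference_map_transfer:
  shows "regular_multiplicities (difference_map G) (UNIV \<times> K) S \<longleftrightarrow> regular_multiplicities G K S"
    and "has_regular_multiplicity (difference_map G) (UNIV \<times> K) n
           \<longleftrightarrow> has_regular_multiplicity G K n"
proof -
  define \<sigma> where "\<sigma> y = G (fst y) - snd y" for y
  have surj: "surj \<sigma>"
    by (rule surjI[where f = "\<lambda>v. (0, G 0 - v)"]) (simp add: \<sigma>_def)
  have fibres: "bij_betw snd {z. difference_map G z = y} {w. G w = \<sigma> y}" for y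
    by (rule bij_betw_byWitness[where f' = "\<lambda>w. (fst y - w, w)"])
      (auto simp: difference_map_eq_iff \<sigma>_def)
  have critical: "y \<in> difference_map G ` (UNIV \<times> K) \<longleftrightarrow> \<sigma> y \<in> G ` K" for y
  proof
    assume "y \<in> difference_map G ` (UNIV \<times> K)"
    then obtain z where "snd z \<in> K" "difference_map G z = y"
      by (auto simp: mem_Times_iff)
    then have "\<sigma> y = G (snd z)"
      by (simp add: difference_map_eq_iff \<sigma>_def)
    then show "\<sigma> y \<in> G ` K"
      using \<open>snd z \<in> K\<close> by simp
  next
    assume "\<sigma> y \<in> G ` K"
    then obtain w where "w \<in> K" "G w = \<sigma> y" by auto
    then have "difference_map G (fst y - w, w) = y"
      by (simp add: difference_map_eq_iff \<sigma>_def)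
    moreover have "(fst y - w, w) \<in> UNIV \<times> K"
      using \<open>w \<in> K\<close> by simp
    ultimately show "y \<in> difference_map G ` (UNIV \<times> K)"
      by (metis image_eqI)
  qed
  from regular_multiplicities_transfer[OF surj has_multiplicity_bij_betw[OF fibres] critical]
  show "regular_multiplicities (difference_map G) (UNIV \<times> K) S \<longleftrightarrow> regular_multiplicities G K S"
    and "has_regular_multiplicity (difference_map G) (UNIV \<times> K) n
           \<longleftrightarrow> has_regular_multiplicity G K n" .
qed

lemma surj_shear_iff:
  fixes L M :: "'a::ab_group_add \<Rightarrow> 'b::ab_group_add"
  assumes "L 0 = 0"
  shows "surj (\<lambda>z. (fst z + snd z, L (fst z + snd z) - M (snd z))) \<longleftrightarrow> surj M"
proof
  assume surj: "surj (\<lambda>z. (fst z + snd z, L (fst z + snd z) - M (snd z)))"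
  show "surj M"
    unfolding surj_def
  proof
    fix v
    obtain z where "(0, - v) = (fst z + snd z, L (fst z + snd z) - M (snd z))"
      using surjD[OF surj] by blast
    then have "v = M (snd z)"
      using assms by (auto simp: prod_eq_iff)
    then show "\<exists>k. v = M k" by blast
  qed
next
  assume surj: "surj M"
  show "surj (\<lambda>z. (fst z + snd z, L (fst z + snd z) - M (snd z)))"
    unfolding surj_def
  proof
    fix y :: "'a \<times> 'b"
    obtain k where "M k = L (fst y) - snd y"
      using surjD[OF surj, of "L (fst y) - snd y"] by metis
    then have "y = (fst (fst y - k, k) + snd (fst y - k, k),
                    L (fst (fst y - k, k) + snd (fst y - k, k)) - M (snd (fst y - k, k)))"
      by simp
    then show "\<exists>z. y = (fst z + snd z, L (fst z + snd z) - M (snd z))" by blast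
  qed
qed

lemma critical_point_difference_map:
  assumes G': "\<And>x. (G has_derivative G' x) (at x)"
  shows "critical_point (difference_map G) (q, w) \<longleftrightarrow> \<not> surj (G' w)"
proof -
  define D where "D z = (fst z + snd z, G' (q + w) (fst z + snd z) - G' w (snd z))" for z
  have "(difference_map G has_derivative D) (at (q, w))"
    unfolding difference_map_def[abs_def] D_def
    by (auto intro!: derivative_eq_intros has_derivative_compose[OF _ G'])
  moreover have "surj D \<longleftrightarrow> surj (G' w)"
    unfolding D_def
    by (rule surj_shear_iff) (use G' has_derivative_linear linear_0 in blast)
  ultimately show ?thesis
    unfolding critical_point_def using has_derivative_unique by blast
qed

lemma critical_set_difference_map:
  assumes "\<And>x. (G has_derivative G' x) (at x)"
  shows "critical_set (difference_map G) = UNIV \<times> {w. \<not> surj (G' w)}"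
  using critical_point_difference_map[OF assms] by (auto simp: critical_set_def)

section \<open>The gradient and Hessian of the cubic form\<close>

lemma surj_matrix_vector_mult_iff_det: "surj ((*v) (A::'a::field^'n^'n)) \<longleftrightarrow> det A \<noteq> 0"
  unfolding invertible_det_nz[symmetric] invertible_def matrix_right_invertible_surjective[symmetric]
  using matrix_left_right_inverse by blast

lemma gradient_eqI:
  assumes "(f has_derivative (\<lambda>h. g \<bullet> h)) (at q)"
  shows "gradient f q = g"
  unfolding gradient_def
proof (rule the_equality)
  fix g' assume "(f has_derivative (\<lambda>h. g' \<bullet> h)) (at q)"
  then have "(\<lambda>h. g' \<bullet> h) = (\<lambda>h. g \<bullet> h)"
    using assms has_derivative_unique by blast
  then have "(g' - g) \<bullet> (g' - g) = 0"
    by (metis inner_diff_left right_minus_eq)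
  then show "g' = g" by simp
qed (fact assms)

lemma hessian_eqI:
  assumes "(gradient f has_derivative (\<lambda>h. H *v h)) (at q)"
  shows "hessian f q = H"
  unfolding hessian_def
proof (rule the_equality)
  fix H' assume "(gradient f has_derivative (\<lambda>h. H' *v h)) (at q)"
  then have "(\<lambda>h. H' *v h) = (\<lambda>h. H *v h)"
    using assms has_derivative_unique by blast
  then show "H' = H" by (metis matrix_eq)
qed (fact assms)

lemma has_derivative_vec_nth [derivative_intros]: "((\<lambda>x. x $ i) has_derivative (\<lambda>h. h $ i)) F"
  by (rule bounded_linear_imp_has_derivative) (rule bounded_linear_vec_nth)

definition cubic_grad :: "real \<Rightarrow> real \<Rightarrow> real \<Rightarrow> real \<Rightarrow> real^2 \<Rightarrow> real^2" where
  "cubic_grad a b c d q =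
     (3*a*(q$1)^2 + 2*b*(q$1)*(q$2) + c*(q$2)^2) *\<^sub>R axis 1 1
   + (b*(q$1)^2 + 2*c*(q$1)*(q$2) + 3*d*(q$2)^2) *\<^sub>R axis 2 1"

definition cubic_hess :: "real \<Rightarrow> real \<Rightarrow> real \<Rightarrow> real \<Rightarrow> real^2 \<Rightarrow> real^2^2" where
  "cubic_hess a b c d q =
     vector [vector [6*a*(q$1) + 2*b*(q$2), 2*b*(q$1) + 2*c*(q$2)],
             vector [2*b*(q$1) + 2*c*(q$2), 2*c*(q$1) + 6*d*(q$2)]]"

lemma cubic_grad_nth [simp]:
  "cubic_grad a b c d q $ 1 = 3*a*(q$1)^2 + 2*b*(q$1)*(q$2) + c*(q$2)^2"
  "cubic_grad a b c d q $ 2 = b*(q$1)^2 + 2*c*(q$1)*(q$2) + 3*d*(q$2)^2"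
  by (simp_all add: cubic_grad_def axis_def)

lemma cubic_hess_mult_nth [simp]:
  "(cubic_hess a b c d q *v h) $ 1 = (6*a*(q$1) + 2*b*(q$2)) * h$1 + (2*b*(q$1) + 2*c*(q$2)) * h$2"
  "(cubic_hess a b c d q *v h) $ 2 = (2*b*(q$1) + 2*c*(q$2)) * h$1 + (2*c*(q$1) + 6*d*(q$2)) * h$2"
  by (simp_all add: cubic_hess_def matrix_vector_mult_def sum_2)

lemma has_derivative_cubicF:
  "(cubicF a b c d has_derivative (\<lambda>h. cubic_grad a b c d q \<bullet> h)) (at q)"
proof -
  have "(cubicF a b c d has_derivative (\<lambda>h. a * (3 * (q$1)^2 * h$1)
      + b * ((2 * q$1 * h$1) * q$2 + (q$1)^2 * h$2)
      + c * ((h$1 * (q$2)^2) + q$1 * (2*q$2*h$2)) + d * (3*(q$2)^2*h$2))) (at q)"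
    unfolding cubicF_def[abs_def]
    by (auto intro!: derivative_eq_intros simp: power2_eq_square power3_eq_cube algebra_simps)
  also have "(\<lambda>h. a * (3 * (q$1)^2 * h$1) + b * ((2 * q$1 * h$1) * q$2 + (q$1)^2 * h$2)
      + c * ((h$1 * (q$2)^2) + q$1 * (2*q$2*h$2)) + d * (3*(q$2)^2*h$2))
    = (\<lambda>h. cubic_grad a b c d q \<bullet> h)"
    by (simp add: fun_eq_iff inner_vec_def sum_2 algebra_simps power2_eq_square)
  finally show ?thesis .
qed

lemma has_derivative_cubic_grad:
  "(cubic_grad a b c d has_derivative (\<lambda>h. cubic_hess a b c d q *v h)) (at q)"
proof -
  have "(cubic_grad a b c d has_derivative (\<lambda>h.
        (3*a*(2*q$1*h$1) + 2*b*(h$1*q$2 + q$1*h$2) + c*(2*q$2*h$2)) *\<^sub>R axis 1 1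
      + (b*(2*q$1*h$1) + 2*c*(h$1*q$2 + q$1*h$2) + 3*d*(2*q$2*h$2)) *\<^sub>R axis 2 1)) (at q)"
    unfolding cubic_grad_def[abs_def]
    by (auto intro!: derivative_eq_intros simp: power2_eq_square algebra_simps)
  also have "(\<lambda>h.
        (3*a*(2*q$1*h$1) + 2*b*(h$1*q$2 + q$1*h$2) + c*(2*q$2*h$2)) *\<^sub>R axis 1 1
      + (b*(2*q$1*h$1) + 2*c*(h$1*q$2 + q$1*h$2) + 3*d*(2*q$2*h$2)) *\<^sub>R axis 2 1)
    = (\<lambda>h. cubic_hess a b c d q *v h)"
    by (simp add: fun_eq_iff vec_eq_iff forall_2 axis_def algebra_simps)
  finally show ?thesis .
qed

lemma gradient_cubicF: "gradient (cubicF a b c d) = cubic_grad a b c d"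
  using gradient_eqI[OF has_derivative_cubicF] by blast

lemma hessian_cubicF: "hessian (cubicF a b c d) = cubic_hess a b c d"
  using hessian_eqI[OF has_derivative_cubic_grad[folded gradient_cubicF]] by blast

lemma Psi_cubicF: "Psi (cubicF a b c d) = difference_map (cubic_grad a b c d)"
proof
  fix z :: "(real^2) \<times> (real^2)"
  have "cubic_grad a b c d (fst z) + cubic_hess a b c d (fst z) *v snd z
      = cubic_grad a b c d (fst z + snd z) - cubic_grad a b c d (snd z)"
    by (simp add: vec_eq_iff forall_2 power2_eq_square algebra_simps)
  then show "Psi (cubicF a b c d) z = difference_map (cubic_grad a b c d) z"
    by (simp add: Psi_def difference_map_def gradient_cubicF hessian_cubicF)
qed

lemma critical_set_Psi_cubicF:
  "critical_set (Psi (cubicF a b c d)) = UNIV \<times> {w. det (cubic_hess a b c d w) = 0}"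
  unfolding Psi_cubicF
  by (simp add: critical_set_difference_map[OF has_derivative_cubic_grad]
      surj_matrix_vector_mult_iff_det)

lemma Psi_image_zero_section: "Psi f ` zero_section = lagr_graph f"
proof
  show "Psi f ` zero_section \<subseteq> lagr_graph f"
  proof
    fix z assume "z \<in> Psi f ` zero_section"
    then obtain x where "snd x = 0" "z = Psi f x"
      by (auto simp: zero_section_def)
    then have "z = (fst x, gradient f (fst x))"
      by (simp add: Psi_def)
    then show "z \<in> lagr_graph f"
      unfolding lagr_graph_def by blast
  qed
  show "lagr_graph f \<subseteq> Psi f ` zero_section"
  proof
    fix z assume "z \<in> lagr_graph f"
    then obtain q where "z = (q, gradient f q)"
      by (auto simp: lagr_graph_def)
    moreover have "Psi f (q, 0) = (q, gradient f q)"
      by (simp add: Psi_def)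
    moreover have "(q, 0) \<in> zero_section"
      by (simp add: zero_section_def)
    ultimately show "z \<in> Psi f ` zero_section"
      by (metis image_eqI)
  qed
qed

fun grad_pair :: "real \<Rightarrow> real \<Rightarrow> real \<Rightarrow> real \<Rightarrow> real \<times> real \<Rightarrow> real \<times> real" where
  "grad_pair a b c d (x, y) = (3*a*x^2 + 2*b*x*y + c*y^2, b*x^2 + 2*c*x*y + 3*d*y^2)"

fun hess_det_pair :: "real \<Rightarrow> real \<Rightarrow> real \<Rightarrow> real \<Rightarrow> real \<times> real \<Rightarrow> real" where
  "hess_det_pair a b c d (x, y) = (6*a*x + 2*b*y) * (2*c*x + 6*d*y) - (2*b*x + 2*c*y)^2"

definition vec_of_pair :: "real \<times> real \<Rightarrow> real^2" where
  "vec_of_pair u = vector [fst u, snd u]"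

lemma bij_vec_of_pair: "bij vec_of_pair"
  by (rule o_bij[where g = "\<lambda>w. (w$1, w$2)"])
    (auto simp: vec_of_pair_def fun_eq_iff vec_eq_iff forall_2)

lemma vec_of_pair_zero: "vec_of_pair 0 = 0"
  by (simp add: vec_of_pair_def vec_eq_iff forall_2 zero_prod_def)

lemma grad_pair_eq_cubic_grad:
  "grad_pair a b c d u = (\<lambda>w. (w$1, w$2)) (cubic_grad a b c d (vec_of_pair u))"
  by (cases u) (simp add: vec_of_pair_def)

lemma det_cubic_hess_vec_of_pair:
  "det (cubic_hess a b c d (vec_of_pair u)) = hess_det_pair a b c d u"
  by (cases u) (simp add: vec_of_pair_def det_2 cubic_hess_def power2_eq_square)

lemma hess_det_pair_zeros_vimage:
  "{u. hess_det_pair a b c d u = 0} = vec_of_pair -` {w. det (cubic_hess a b c d w) = 0}"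
  by (simp add: det_cubic_hess_vec_of_pair)

lemma Psi_cubicF_regular_multiplicities:
  shows "regular_multiplicities (Psi (cubicF a b c d)) (critical_set (Psi (cubicF a b c d))) S
           \<longleftrightarrow> regular_multiplicities (grad_pair a b c d) {u. hess_det_pair a b c d u = 0} S"
    and "has_regular_multiplicity (Psi (cubicF a b c d)) (critical_set (Psi (cubicF a b c d))) n
           \<longleftrightarrow> has_regular_multiplicity (grad_pair a b c d) {u. hess_det_pair a b c d u = 0} n"
proof -
  have "bij (\<lambda>w::real^2. (w$1, w$2))"
    by (rule o_bij[of vec_of_pair]) (auto simp: vec_of_pair_def fun_eq_iff vec_eq_iff forall_2)
  note conj = regular_multiplicities_conjugate[where G' = "grad_pair a b c d" and G = "cubic_grad a b c d",
      OF bij_vec_of_pair this grad_pair_eq_cubic_grad hess_det_pair_zeros_vimage]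
  show "regular_multiplicities (Psi (cubicF a b c d)) (critical_set (Psi (cubicF a b c d))) S
           \<longleftrightarrow> regular_multiplicities (grad_pair a b c d) {u. hess_det_pair a b c d u = 0} S"
    and "has_regular_multiplicity (Psi (cubicF a b c d)) (critical_set (Psi (cubicF a b c d))) n
           \<longleftrightarrow> has_regular_multiplicity (grad_pair a b c d) {u. hess_det_pair a b c d u = 0} n"
    unfolding critical_set_Psi_cubicF unfolding Psi_cubicF difference_map_transfer
    by (simp_all only: conj)
qed

lemma critical_set_Psi_cubicF_eq_zero_section_iff:
  "critical_set (Psi (cubicF a b c d)) = zero_section
     \<longleftrightarrow> {u. hess_det_pair a b c d u = 0} \<subseteq> {0}"
proof -
  have zero_section: "zero_section = UNIV \<times> {0}"
    by (auto simp: zero_section_def)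
  have "critical_set (Psi (cubicF a b c d)) = zero_section
      \<longleftrightarrow> {w. det (cubic_hess a b c d w) = 0} = {0}"
    unfolding critical_set_Psi_cubicF zero_section by (simp add: times_eq_iff)
  also have "\<dots> \<longleftrightarrow> {w. det (cubic_hess a b c d w) = 0} \<subseteq> {0}"
  proof -
    have "det (cubic_hess a b c d 0) = 0"
      by (simp add: cubic_hess_def det_2)
    then show ?thesis by blast
  qed
  also have "\<dots> \<longleftrightarrow> {u. hess_det_pair a b c d u = 0} \<subseteq> {0}"
    unfolding hess_det_pair_zeros_vimage
    by (rule bij_vimage_subset_zero_iff[OF bij_vec_of_pair vec_of_pair_zero, symmetric])
  finally show ?thesis .
qed

section \<open>Linear changes of variables\<close>

definition cubic_disc :: "real \<Rightarrow> real \<Rightarrow> real \<Rightarrow> real \<Rightarrow> real" where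
  "cubic_disc a b c d = 18*a*b*c*d + b^2*c^2 - 4*a*c^3 - 4*b^3*d - 27*a^2*d^2"

definition disc_classifies :: "real \<Rightarrow> real \<Rightarrow> real \<Rightarrow> real \<Rightarrow> bool" where
  "disc_classifies a b c d \<longleftrightarrow>
       cubic_disc a b c d > 0 \<and> elliptic_fibres (grad_pair a b c d) {u. hess_det_pair a b c d u = 0}
     \<or> cubic_disc a b c d < 0 \<and> hyperbolic_fibres (grad_pair a b c d) {u. hess_det_pair a b c d u = 0}
     \<or> cubic_disc a b c d = 0 \<and> parabolic_fibres (grad_pair a b c d) {u. hess_det_pair a b c d u = 0}"

lemma bij_linear_pair:
  fixes p q r t :: real
  assumes det: "p*t - q*r \<noteq> 0"
  shows "bij (\<lambda>(x, y). (p*x + q*y, r*x + t*y))"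
proof (rule o_bij)
  have "t*(p*x + q*y) - q*(r*x + t*y) = (p*t - q*r) * x"
    "p*(r*x + t*y) - r*(p*x + q*y) = (p*t - q*r) * y"
    "p*(t*x - q*y) + q*(p*y - r*x) = (p*t - q*r) * x"
    "r*(t*x - q*y) + t*(p*y - r*x) = (p*t - q*r) * y" for x y
    by (simp_all add: algebra_simps)
  with det show "(\<lambda>(x, y). ((t*x - q*y) / (p*t - q*r), (p*y - r*x) / (p*t - q*r)))
      \<circ> (\<lambda>(x, y). (p*x + q*y, r*x + t*y)) = id"
    and "(\<lambda>(x, y). (p*x + q*y, r*x + t*y))
      \<circ> (\<lambda>(x, y). ((t*x - q*y) / (p*t - q*r), (p*y - r*x) / (p*t - q*r))) = id"
    by (auto simp: fun_eq_iff times_divide_eq_right add_divide_distrib[symmetric]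
        diff_divide_distrib[symmetric])
qed

lemma bij_scale_pair:
  fixes \<alpha> \<beta> :: real
  assumes "\<alpha> \<noteq> 0" "\<beta> \<noteq> 0"
  shows "bij (\<lambda>(x, y). (\<alpha>*x, \<beta>*y))"
  using bij_linear_pair[of \<alpha> \<beta> 0 0] assms by simp

text \<open>\<open>a' \<dots> d'\<close> are the coefficients of \<open>F(px + qy, rx + ty)\<close>. The gradient of the new form is the
  old gradient at the substituted point, composed with the transposed matrix.\<close>

lemma disc_classifies_linear_change:
  assumes det: "p*t - q*r \<noteq> 0"
    and a': "a' = a*p^3 + b*p^2*r + c*p*r^2 + d*r^3"
    and b': "b' = 3*a*p^2*q + b*(p^2*t + 2*p*q*r) + c*(q*r^2 + 2*p*r*t) + 3*d*r^2*t"
    and c': "c' = 3*a*p*q^2 + b*(q^2*r + 2*p*q*t) + c*(p*t^2 + 2*q*r*t) + 3*d*r*t^2"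
    and d': "d' = a*q^3 + b*q^2*t + c*q*t^2 + d*t^3"
  shows "disc_classifies a' b' c' d' \<longleftrightarrow> disc_classifies a b c d"
proof -
  define \<phi> :: "real \<times> real \<Rightarrow> real \<times> real" where "\<phi> = (\<lambda>(x, y). (p*x + q*y, r*x + t*y))"
  define \<psi> :: "real \<times> real \<Rightarrow> real \<times> real" where "\<psi> = (\<lambda>(x, y). (p*x + r*y, q*x + t*y))"
  have bij_\<phi>: "bij \<phi>"
    unfolding \<phi>_def by (rule bij_linear_pair[OF det])
  have bij_\<psi>: "bij \<psi>"
    unfolding \<psi>_def by (rule bij_linear_pair) (use det in argo)
  have grad: "grad_pair a' b' c' d' u = \<psi> (grad_pair a b c d (\<phi> u))" for u
    by (cases u) (simp add: a' b' c' d' \<phi>_def \<psi>_def power2_eq_square power3_eq_cube algebra_simps)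
  have "hess_det_pair a' b' c' d' (x, y) = (p*t - q*r)^2 * hess_det_pair a b c d (\<phi> (x, y))" for x y
    unfolding hess_det_pair.simps a' b' c' d' \<phi>_def case_prod_conv by algebra
  then have critical: "{u. hess_det_pair a' b' c' d' u = 0} = \<phi> -` {u. hess_det_pair a b c d u = 0}"
    using det by (auto simp: case_prod_beta')
  have "\<phi> 0 = 0"
    by (simp add: \<phi>_def zero_prod_def)
  note types = fibre_types_conjugate[where G' = "grad_pair a' b' c' d'" and G = "grad_pair a b c d",
      OF bij_\<phi> bij_\<psi> grad critical this]
  have "cubic_disc a' b' c' d' = (p*t - q*r)^6 * cubic_disc a b c d"
    unfolding cubic_disc_def a' b' c' d' by algebra
  moreover have "(p*t - q*r)^6 > 0"
    using det by (simp add: zero_less_power_eq)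
  ultimately show ?thesis
    unfolding disc_classifies_def types by (simp add: zero_less_mult_iff mult_less_0_iff)
qed

section \<open>Normal forms\<close>

lemma elliptic_fibres_complex_square: "elliptic_fibres (\<lambda>z::complex. z^2) {0}"
proof -
  have fibre: "{z. z^2 = v} = {csqrt v, - csqrt v}" for v :: complex
  proof -
    have "z^2 = v \<longleftrightarrow> z = csqrt v \<or> z = - csqrt v" for z
      using power2_eq_iff[of z "csqrt v"] by simp
    then show ?thesis by auto
  qed
  have "csqrt v \<noteq> - csqrt v" if "v \<noteq> 0" for v
  proof
    assume "csqrt v = - csqrt v"
    then have "2 * csqrt v = 0"
      by (metis mult_2 add.right_inverse)
    with that show False by simp
  qed
  then show ?thesis
    by (auto simp: elliptic_fibres_def regular_multiplicities_def has_multiplicity_def fibre)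
qed

fun hyperbolic_model :: "real \<times> real \<Rightarrow> real \<times> real" where
  "hyperbolic_model (x, y) = (x^2, y^2)"

lemma hyperbolic_model_fibre:
  "{u. hyperbolic_model u = (x^2, y^2)} = {x, -x} \<times> {y, -y}"
proof (rule set_eqI)
  fix u :: "real \<times> real"
  obtain p q where u: "u = (p, q)" by fastforce
  have "hyperbolic_model u = (x^2, y^2) \<longleftrightarrow> p^2 = x^2 \<and> q^2 = y^2"
    by (simp add: u)
  also have "\<dots> \<longleftrightarrow> u \<in> {x, -x} \<times> {y, -y}"
    by (simp add: u power2_eq_iff mem_Times_iff del: insert_Times_insert)
  finally show "u \<in> {u. hyperbolic_model u = (x^2, y^2)} \<longleftrightarrow> u \<in> {x, -x} \<times> {y, -y}"
    by simp
qed

lemma hyperbolic_model_regular_iff: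
  "(s^2, t^2) \<notin> hyperbolic_model ` {(x, y). x * y = 0} \<longleftrightarrow> s \<noteq> 0 \<and> t \<noteq> 0"
proof
  assume not_critical: "(s^2, t^2) \<notin> hyperbolic_model ` {(x, y). x * y = 0}"
  have "(s^2, t^2) = hyperbolic_model (0, t)" if "s = 0"
    using that by simp
  moreover have "(s^2, t^2) = hyperbolic_model (s, 0)" if "t = 0"
    using that by simp
  moreover have "(0, t) \<in> {(x, y). x * y = 0}" "(s, 0) \<in> {(x, y). x * y = 0}"
    by simp_all
  ultimately show "s \<noteq> 0 \<and> t \<noteq> 0"
    using not_critical rev_image_eqI by blast
next
  assume "s \<noteq> 0 \<and> t \<noteq> 0"
  then have not_critical: "u \<notin> {(x, y). x * y = 0}" if "u \<in> {s, -s} \<times> {t, -t}" for u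
    using that by auto
  show "(s^2, t^2) \<notin> hyperbolic_model ` {(x, y). x * y = 0}"
  proof
    assume "(s^2, t^2) \<in> hyperbolic_model ` {(x, y). x * y = 0}"
    then obtain u where "(s^2, t^2) = hyperbolic_model u" "u \<in> {(x, y). x * y = 0}"
      by (rule imageE)
    moreover from this(1) have "u \<in> {s, -s} \<times> {t, -t}"
      unfolding hyperbolic_model_fibre[symmetric] by simp
    ultimately show False
      using not_critical by blast
  qed
qed

lemma hyperbolic_model_regular_multiplicities:
  "regular_multiplicities hyperbolic_model {(x, y). x * y = 0} {0, 4}"
  unfolding regular_multiplicities_def
proof (intro allI impI)
  fix v assume v_regular: "v \<notin> hyperbolic_model ` {(x, y). x * y = 0}"
  show "\<exists>n\<in>{0, 4}. has_multiplicity hyperbolic_model v n"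
  proof (cases "v \<in> range hyperbolic_model")
    case True
    then obtain u where "v = hyperbolic_model u" by blast
    moreover obtain x y where "u = (x, y)" by fastforce
    ultimately have v: "v = (x^2, y^2)" by simp
    have "x \<noteq> 0 \<and> y \<noteq> 0"
      using v_regular unfolding v hyperbolic_model_regular_iff .
    then have "has_multiplicity hyperbolic_model v 4"
      by (simp add: v has_multiplicity_def hyperbolic_model_fibre card_cartesian_product)
    then show ?thesis by blast
  next
    case False
    then show ?thesis by (simp add: has_multiplicity_outside_range)
  qed
qed

lemma hyperbolic_model_not_surj: "(-1, -1) \<notin> range hyperbolic_model"
proof
  assume "(-1, -1) \<in> range hyperbolic_model"
  then obtain x y where "(-1, -1) = hyperbolic_model (x, y)"
    by (metis rangeE surj_pair)
  then have "x^2 = -1" by simp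
  then show False
    by (metis neg_0_le_iff_le not_one_le_zero zero_le_power2)
qed

lemma hyperbolic_fibres_model: "hyperbolic_fibres hyperbolic_model {(x, y). x * y = 0}"
proof -
  have "has_multiplicity hyperbolic_model (1^2, 1^2) 4"
    unfolding has_multiplicity_def hyperbolic_model_fibre by (simp add: card_cartesian_product)
  then have "has_regular_multiplicity hyperbolic_model {(x, y). x * y = 0} 4"
    unfolding has_regular_multiplicity_def
    using hyperbolic_model_regular_iff[of 1 1] by (intro exI[of _ "(1^2, 1^2)"]) simp
  moreover have "\<not> {(x, y). x * y = (0::real)} \<subseteq> {0}"
    by (rule not_subset_zero_pairI) simp
  ultimately show ?thesis
    using hyperbolic_model_regular_multiplicities
      has_regular_multiplicity_0I[OF hyperbolic_model_not_surj]
    by (simp add: hyperbolic_fibres_def)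
qed

fun parabolic_model :: "real \<times> real \<Rightarrow> real \<times> real" where
  "parabolic_model (x, y) = (x * y, x^2)"

lemma parabolic_model_card_fibre_le:
  assumes regular: "(s, t) \<notin> parabolic_model ` {(x, y). x = 0}"
  shows "card {u. parabolic_model u = (s, t)} \<le> 2"
proof -
  have "{u. parabolic_model u = (s, t)} \<subseteq> (\<lambda>x. (x, s / x)) ` {sqrt t, - sqrt t}"
  proof
    fix u assume u: "u \<in> {u. parabolic_model u = (s, t)}"
    obtain x y where xy: "u = (x, y)" by fastforce
    with u have "x * y = s" "x^2 = t" by simp_all
    have "u \<notin> {(x, y). x = 0}"
    proof
      assume "u \<in> {(x, y). x = 0}"
      then have "parabolic_model u \<in> parabolic_model ` {(x, y). x = 0}" by (rule imageI)
      with u regular show False by simp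
    qed
    with xy have "x \<noteq> 0" by simp
    with \<open>x * y = s\<close> have "y = s / x"
      by (metis nonzero_mult_div_cancel_left)
    moreover have "x = sqrt t \<or> x = - sqrt t"
      using \<open>x^2 = t\<close> real_sqrt_abs[of x] by (cases "x \<ge> 0") simp_all
    ultimately show "u \<in> (\<lambda>x. (x, s / x)) ` {sqrt t, - sqrt t}"
      using xy by blast
  qed
  then have "card {u. parabolic_model u = (s, t)} \<le> card ((\<lambda>x. (x, s / x)) ` {sqrt t, - sqrt t})"
    by (rule card_mono[rotated]) simp
  also have "\<dots> \<le> card {sqrt t, - sqrt t}"
    by (rule card_image_le) simp
  also have "\<dots> \<le> 2"
    by (simp add: card_insert_if)
  finally show ?thesis .
qed

lemma parabolic_model_not_surj: "(0, -1) \<notin> range parabolic_model"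
proof
  assume "(0, -1) \<in> range parabolic_model"
  then obtain x y where "(0, -1) = parabolic_model (x, y)"
    by (metis rangeE surj_pair)
  then have "x^2 = -1" by simp
  then show False
    by (metis neg_0_le_iff_le not_one_le_zero zero_le_power2)
qed

lemma parabolic_fibres_model: "parabolic_fibres parabolic_model {(x, y). x = 0}"
proof -
  let ?K = "{(x, y::real). x = (0::real)}"
  have "\<not> has_regular_multiplicity parabolic_model ?K 4"
  proof
    assume "has_regular_multiplicity parabolic_model ?K 4"
    then obtain v where "v \<notin> parabolic_model ` ?K" "has_multiplicity parabolic_model v 4"
      unfolding has_regular_multiplicity_def by blast
    moreover obtain s t where "v = (s, t)"
      by fastforce
    ultimately show False
      using parabolic_model_card_fibre_le[of s t] by (simp add: has_multiplicity_def)
  qed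
  moreover have "has_regular_multiplicity parabolic_model ?K 0"
    by (rule has_regular_multiplicity_0I[OF parabolic_model_not_surj])
  moreover have "\<not> ?K \<subseteq> {0}"
    by (rule not_subset_zero_pairI) simp
  ultimately show ?thesis
    by (simp add: parabolic_fibres_def)
qed

lemma disc_classifies_x3: "disc_classifies a 0 0 0"
proof -
  have critical: "{u. hess_det_pair a 0 0 0 u = 0} = UNIV"
    by auto
  have "(0, 1) \<notin> range (grad_pair a 0 0 0)"
    by auto
  then have "has_regular_multiplicity (grad_pair a 0 0 0) UNIV 0"
    by (rule has_regular_multiplicity_0I)
  moreover have "\<not> has_regular_multiplicity (grad_pair a 0 0 0) UNIV 4"
    by (auto simp: has_regular_multiplicity_def has_multiplicity_outside_range)
  moreover have "\<not> (UNIV :: (real \<times> real) set) \<subseteq> {0}"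
    by (rule not_subset_zero_pairI) simp
  ultimately show ?thesis
    by (simp add: disc_classifies_def cubic_disc_def parabolic_fibres_def critical)
qed

lemma disc_classifies_x2y:
  assumes "b \<noteq> 0"
  shows "disc_classifies 0 b 0 0"
proof -
  have "parabolic_fibres (grad_pair 0 b 0 0) {u. hess_det_pair 0 b 0 0 u = 0}
      \<longleftrightarrow> parabolic_fibres parabolic_model {(x, y). x = 0}"
  proof (rule fibre_types_conjugate(3)[where \<phi> = id])
    show "bij (\<lambda>(x, y). (2*b*x, b*y))"
      by (rule bij_scale_pair) (use assms in simp_all)
    show "grad_pair 0 b 0 0 u = (\<lambda>(x, y). (2*b*x, b*y)) (parabolic_model (id u))" for u
      by (cases u) simp
    show "{u. hess_det_pair 0 b 0 0 u = 0} = id -` {(x, y). x = 0}"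
      using assms by (auto simp: power2_eq_square)
  qed (simp_all add: zero_prod_def)
  then show ?thesis
    using parabolic_fibres_model by (simp add: disc_classifies_def cubic_disc_def)
qed

lemma disc_classifies_x3_y3:
  assumes "a \<noteq> 0" "d \<noteq> 0"
  shows "disc_classifies a 0 0 d"
proof -
  have "hyperbolic_fibres (grad_pair a 0 0 d) {u. hess_det_pair a 0 0 d u = 0}
      \<longleftrightarrow> hyperbolic_fibres hyperbolic_model {(x, y). x * y = 0}"
  proof (rule fibre_types_conjugate(2)[where \<phi> = id])
    show "bij (\<lambda>(x, y). (3*a*x, 3*d*y))"
      by (rule bij_scale_pair) (use assms in simp_all)
    show "grad_pair a 0 0 d u = (\<lambda>(x, y). (3*a*x, 3*d*y)) (hyperbolic_model (id u))" for u
      by (cases u) simp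
    show "{u. hess_det_pair a 0 0 d u = 0} = id -` {(x, y). x * y = 0}"
      using assms by auto
  qed (simp_all add: zero_prod_def)
  moreover have "cubic_disc a 0 0 d < 0"
    using assms by (simp add: cubic_disc_def)
  ultimately show ?thesis
    using hyperbolic_fibres_model by (simp add: disc_classifies_def)
qed

lemma hess_det_pair_x3_xy2_eq_0_iff:
  assumes "a * c < 0"
  shows "hess_det_pair a 0 c 0 (x, y) = 0 \<longleftrightarrow> x = 0 \<and> y = 0"
proof
  assume "hess_det_pair a 0 c 0 (x, y) = 0"
  moreover have "hess_det_pair a 0 c 0 (x, y) = 12 * (a*c) * x^2 - 4 * c^2 * y^2"
    by (simp add: power2_eq_square algebra_simps)
  moreover have "12 * (a*c) * x^2 \<le> 0" "4 * c^2 * y^2 \<ge> 0"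
    using assms by (simp_all add: mult_nonpos_nonneg)
  ultimately have "12 * (a*c) * x^2 = 0" "4 * c^2 * y^2 = 0"
    by linarith+
  then show "x = 0 \<and> y = 0"
    using assms by auto
qed simp

text \<open>With \<open>c = -3ak\<^sup>2\<close>, the gradient of \<open>ax\<^sup>3 + cxy\<^sup>2\<close> is \<open>z \<mapsto> z\<^sup>2\<close> in the complex coordinate
  \<open>z = x + iky\<close>, followed by a real-linear bijection of the target.\<close>

lemma disc_classifies_x3_xy2_neg:
  assumes "a * c < 0"
  shows "disc_classifies a 0 c 0"
proof -
  have "a \<noteq> 0" "c \<noteq> 0"
    using assms by auto
  define k where "k = sqrt (- c / (3*a))"
  have "- c / (3*a) > 0"
    using assms by (auto simp: zero_less_divide_iff divide_less_0_iff mult_less_0_iff)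
  then have "k > 0" and c: "c = - 3*a*k^2"
    using \<open>a \<noteq> 0\<close> by (simp_all add: k_def)
  define \<phi> :: "real \<times> real \<Rightarrow> complex" where "\<phi> = (\<lambda>(x, y). Complex x (k*y))"
  define \<psi> :: "complex \<Rightarrow> real \<times> real" where "\<psi> w = (3*a * Re w, - 3*a*k * Im w)" for w
  have "elliptic_fibres (grad_pair a 0 c 0) {u. hess_det_pair a 0 c 0 u = 0}
      \<longleftrightarrow> elliptic_fibres (\<lambda>z::complex. z^2) {0}"
  proof (rule fibre_types_conjugate(1))
    show "bij \<phi>"
      by (rule o_bij[where g = "\<lambda>w. (Re w, Im w / k)"])
        (use \<open>k > 0\<close> in \<open>auto simp: \<phi>_def fun_eq_iff complex_eq_iff\<close>)
    show "bij \<psi>"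
      by (rule o_bij[where g = "\<lambda>(x, y). Complex (x / (3*a)) (- y / (3*a*k))"])
        (use \<open>k > 0\<close> \<open>a \<noteq> 0\<close> in \<open>auto simp: \<psi>_def fun_eq_iff complex_eq_iff\<close>)
    show "grad_pair a 0 c 0 u = \<psi> ((\<phi> u)^2)" for u
      by (cases u) (simp add: \<phi>_def \<psi>_def c power2_eq_square algebra_simps)
    have "hess_det_pair a 0 c 0 (x, y) = 0 \<longleftrightarrow> x = 0 \<and> y = 0" for x y
      using hess_det_pair_x3_xy2_eq_0_iff[OF assms] .
    then show "{u. hess_det_pair a 0 c 0 u = 0} = \<phi> -` {0}"
      using \<open>k > 0\<close> by (auto simp: \<phi>_def complex_eq_iff)
    show "\<phi> 0 = 0"
      by (simp add: \<phi>_def zero_prod_def complex_eq_iff)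
  qed
  moreover have "cubic_disc a 0 c 0 > 0"
  proof -
    have "cubic_disc a 0 c 0 = - 4 * (a*c) * c^2"
      by (simp add: cubic_disc_def power2_eq_square power3_eq_cube)
    then show ?thesis
      using assms \<open>c \<noteq> 0\<close> by (simp add: mult_neg_pos)
  qed
  ultimately show ?thesis
    using elliptic_fibres_complex_square by (simp add: disc_classifies_def)
qed

text \<open>With \<open>c = 3am\<^sup>2\<close>, the substitution comes from \<open>(x + y)\<^sup>3 + (x - y)\<^sup>3 = 2x\<^sup>3 + 6xy\<^sup>2\<close>.\<close>

lemma disc_classifies_x3_xy2_pos:
  assumes "a * c > 0"
  shows "disc_classifies a 0 c 0"
proof -
  have "a \<noteq> 0"
    using assms by auto
  define m where "m = sqrt (c / (3*a))"
  have "c / (3*a) > 0"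
    using assms by (auto simp: zero_less_divide_iff zero_less_mult_iff)
  then have "m > 0" and c: "c = 3*a*m^2"
    using \<open>a \<noteq> 0\<close> by (simp_all add: m_def)
  have "disc_classifies (a/2) 0 0 (a/2) \<longleftrightarrow> disc_classifies a 0 c 0"
    by (rule disc_classifies_linear_change[where p = "1/2" and q = "1/2" and r = "1/(2*m)"
          and t = "-1/(2*m)"])
      (use \<open>m > 0\<close> in \<open>simp_all add: c field_simps power2_eq_square power3_eq_cube\<close>)
  then show ?thesis
    using disc_classifies_x3_y3[of "a/2" "a/2"] \<open>a \<noteq> 0\<close> by simp
qed

lemma disc_classifies_x3_x2y: "disc_classifies a b 0 0"
proof (cases "b = 0")
  case True
  then show ?thesis
    using disc_classifies_x3 by simp
next
  case False
  have "disc_classifies a b 0 0 \<longleftrightarrow> disc_classifies 0 b 0 0"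
    by (rule disc_classifies_linear_change[where p = 1 and q = 0 and r = "a/b" and t = 1])
      (use False in simp_all)
  then show ?thesis
    using disc_classifies_x2y[OF False] by simp
qed

lemma disc_classifies_no_y3: "disc_classifies a b c 0"
proof (cases "c = 0")
  case True
  then show ?thesis
    using disc_classifies_x3_x2y by simp
next
  case False
  define \<sigma> where "\<sigma> = - b / (2*c)"
  define a' where "a' = a + b*\<sigma> + c*\<sigma>^2"
  have "disc_classifies a' 0 c 0 \<longleftrightarrow> disc_classifies a b c 0"
    by (rule disc_classifies_linear_change[where p = 1 and q = 0 and r = \<sigma> and t = 1])
      (use False in \<open>simp_all add: a'_def \<sigma>_def\<close>)
  moreover have "disc_classifies a' 0 c 0"
  proof (cases "a' * c" "0::real" rule: linorder_cases)
    case less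
    then show ?thesis by (rule disc_classifies_x3_xy2_neg)
  next
    case greater
    then show ?thesis by (rule disc_classifies_x3_xy2_pos)
  next
    case equal
    with False have "a' = 0" by simp
    have "disc_classifies 0 0 c 0 \<longleftrightarrow> disc_classifies 0 c 0 0"
      by (rule disc_classifies_linear_change[where p = 0 and q = 1 and r = 1 and t = 0]) simp_all
    with \<open>a' = 0\<close> show ?thesis
      using disc_classifies_x2y[OF False] by simp
  qed
  ultimately show ?thesis by simp
qed

text \<open>A binary cubic form is odd, so it changes sign along the upper unit half-circle.\<close>

lemma binary_cubic_has_zero:
  fixes a b c d :: real
  shows "\<exists>x y. (x, y) \<noteq> (0, 0) \<and> a*x^3 + b*x^2*y + c*x*y^2 + d*y^3 = 0"
proof -
  define f where "f s = a * (cos s)^3 + b * (cos s)^2 * sin s + c * cos s * (sin s)^2 + d * (sin s)^3"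
    for s
  have cont: "continuous_on {0..pi} f"
    unfolding f_def by (intro continuous_intros)
  have "f 0 = a" "f pi = - a"
    by (simp_all add: f_def)
  then obtain s where "f s = 0"
    using IVT'[OF _ _ _ cont, of 0] IVT2'[OF _ _ _ cont, of 0] pi_ge_zero
    by (cases "a \<le> 0") force+
  moreover have "(cos s, sin s) \<noteq> (0, 0)"
    using sin_cos_squared_add[of s] by (auto simp del: sin_cos_squared_add)
  ultimately show ?thesis
    unfolding f_def by blast
qed

lemma disc_classifies_all: "disc_classifies a b c d"
proof -
  obtain x y where "(x, y) \<noteq> (0, 0)" and zero: "a*x^3 + b*x^2*y + c*x*y^2 + d*y^3 = 0"
    using binary_cubic_has_zero by blast
  \<comment> \<open>substitute \<open>(X, Y) = (yx' + xy', -xx' + yy')\<close>, which sends \<open>(0, 1)\<close> to the zero \<open>(x, y)\<close>\<close>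
  then have det: "y*y - x*(-x) \<noteq> 0"
    by (auto simp: add_nonneg_eq_0_iff)
  from disc_classifies_linear_change[OF det refl refl refl zero[symmetric]]
  show ?thesis
    using disc_classifies_no_y3 by blast
qed

theorem mainTheorem4:
  fixes a b c d :: real
  shows
   "((18*a*b*c*d + b^2*c^2 > 4*a*c^3 + 4*b^3*d + 27*a^2*d^2)
        \<longleftrightarrow> critical_set (Psi (cubicF a b c d)) = zero_section)
  \<and> ((18*a*b*c*d + b^2*c^2 > 4*a*c^3 + 4*b^3*d + 27*a^2*d^2)
        \<longleftrightarrow> (\<forall>y. regular_value (Psi (cubicF a b c d)) y
                 \<longrightarrow> has_multiplicity (Psi (cubicF a b c d)) y 2))
  \<and> ((18*a*b*c*d + b^2*c^2 > 4*a*c^3 + 4*b^3*d + 27*a^2*d^2)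
        \<longrightarrow> critical_values (Psi (cubicF a b c d)) = lagr_graph (cubicF a b c d))
  \<and> ((18*a*b*c*d + b^2*c^2 < 4*a*c^3 + 4*b^3*d + 27*a^2*d^2)
        \<longleftrightarrow> ((\<forall>y. regular_value (Psi (cubicF a b c d)) y
                 \<longrightarrow> has_multiplicity (Psi (cubicF a b c d)) y 0
                   \<or> has_multiplicity (Psi (cubicF a b c d)) y 4)
             \<and> (\<exists>y. regular_value (Psi (cubicF a b c d)) y
                    \<and> has_multiplicity (Psi (cubicF a b c d)) y 0)
             \<and> (\<exists>y. regular_value (Psi (cubicF a b c d)) y
                    \<and> has_multiplicity (Psi (cubicF a b c d)) y 4)))
  \<and> ((18*a*b*c*d + b^2*c^2 < 4*a*c^3 + 4*b^3*d + 27*a^2*d^2)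
        \<longrightarrow> critical_set (Psi (cubicF a b c d)) \<noteq> zero_section)"
proof -
  let ?\<Psi> = "Psi (cubicF a b c d)"
  let ?G = "grad_pair a b c d" and ?K = "{u. hess_det_pair a b c d u = 0}"
  have all_regular: "(\<forall>y. regular_value ?\<Psi> y \<longrightarrow> (\<exists>n\<in>S. has_multiplicity ?\<Psi> y n))
      \<longleftrightarrow> regular_multiplicities ?G ?K S" for S
    using Psi_cubicF_regular_multiplicities(1) regular_multiplicities_critical_set by blast
  have some_regular: "(\<exists>y. regular_value ?\<Psi> y \<and> has_multiplicity ?\<Psi> y n)
      \<longleftrightarrow> has_regular_multiplicity ?G ?K n" for n
    using Psi_cubicF_regular_multiplicities(2) has_regular_multiplicity_critical_set by blast
  have "critical_set ?\<Psi> = zero_section \<Longrightarrow> critical_values ?\<Psi> = lagr_graph (cubicF a b c d)"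
    by (simp add: critical_values_def Psi_image_zero_section)
  moreover note disc_classifies_all[of a b c d]
    regular_multiplicities_mem[of ?G ?K "{2}" 0] regular_multiplicities_mem[of ?G ?K "{2}" 4]
  ultimately show ?thesis
    using all_regular[of "{2}"] all_regular[of "{0, 4}"] some_regular critical_set_Psi_cubicF_eq_zero_section_iff
    unfolding disc_classifies_def elliptic_fibres_def hyperbolic_fibres_def parabolic_fibres_def
      cubic_disc_def
    by auto
qed

end
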